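(* Let $g_1,g_2$ be monic divisors of $x^m-1$ over $\mathbb{F}_q$, $v_1\in\mathcal{R}$, and let $\mathcal{D}_1$ be the QC code of length $2m$ generated by $(g_1,v_1g_1)$ and $(0,g_2)$. Then $\mathcal{D}_1$ is Euclidean dual-containing iff $g_1\mid g_1^{\perp}$, $g_1\mid g_2^{\perp}\overline{v_1}$ and $g_2\mid g_2^{\perp}(1+\overline{v_1}v_1)$.
   Context: $\mathcal{R}=\mathbb{F}_q[x]/(x^m-1)$, elements identified with representatives of degree $<m$; $[k]=(k_0,\dots,k_{m-1})$; $\overline{k}(x)=k(x^{-1})\bmod(x^m-1)$; $f^*(x)=x^{\deg f}f(1/x)$; for $k\in\mathcal{R}$, $f=\frac{x^m-1}{\gcd(k,x^m-1)}$ and $k^{\perp}=f(0)^{-1}f^*$. For $g\mid x^m-1$, "$g\mid a$" means $g$ divides the representative of $a\in\mathcal{R}$. The QC code generated by $(u_{i1},u_{i2})$, $i=1,2$, is $\{([r_1u_{11}+r_2u_{21}],[r_1u_{12}+r_2u_{22}]):r_i\in\mathcal{R}\}$. Euclidean dual-containing: $\mathcal{D}_1^{\perp_E}\subseteq\mathcal{D}_1$ with $\langle u,v\rangle_E=\sum u_iv_i$. *)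

theory Defs
  imports "HOL-Computational_Algebra.Computational_Algebra"
begin

definition xm1 :: "nat \<Rightarrow> 'a::field poly" where
  "xm1 m = monom 1 m - 1"

text \<open>Elements of R are identified with their representatives of degree < m.\<close>
definition Rset :: "nat \<Rightarrow> 'a::field poly set" where
  "Rset m = {p. degree p < m}"

definition rmult :: "nat \<Rightarrow> 'a::field poly \<Rightarrow> 'a poly \<Rightarrow> 'a poly" where
  "rmult m a b = (a * b) mod xm1 m"

definition cvec :: "nat \<Rightarrow> 'a::zero poly \<Rightarrow> 'a list" where
  "cvec m k = map (coeff k) [0..<m]"

text \<open>conj k (x) = k(x^{-1}) mod (x^m - 1); its i-th coefficient is k_{(m-i) mod m}.\<close>
definition rconj :: "nat \<Rightarrow> 'a::zero poly \<Rightarrow> 'a poly" where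
  "rconj m k = Poly (map (\<lambda>i. coeff k ((m - i) mod m)) [0..<m])"

definition rperp :: "nat \<Rightarrow> 'a::field_gcd poly \<Rightarrow> 'a poly" where
  "rperp m k = (let f = xm1 m div gcd k (xm1 m)
                in smult (inverse (poly f 0)) (reflect_poly f) mod xm1 m)"

definition einner :: "'a::comm_semiring_1 list \<Rightarrow> 'a list \<Rightarrow> 'a" where
  "einner u v = sum_list (map2 (*) u v)"

definition qc_code :: "nat \<Rightarrow> 'a::field poly \<Rightarrow> 'a poly \<Rightarrow> 'a poly \<Rightarrow> 'a poly \<Rightarrow> 'a list set" where
  "qc_code m u11 u12 u21 u22 =
     {cvec m (rmult m r1 u11 + rmult m r2 u21) @ cvec m (rmult m r1 u12 + rmult m r2 u22)
       | r1 r2. r1 \<in> Rset m \<and> r2 \<in> Rset m}"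

definition edual :: "nat \<Rightarrow> 'a::comm_semiring_1 list set \<Rightarrow> 'a list set" where
  "edual n C = {u. length u = n \<and> (\<forall>c\<in>C. einner u c = 0)}"

definition dual_containing :: "nat \<Rightarrow> 'a::comm_semiring_1 list set \<Rightarrow> bool" where
  "dual_containing n C \<longleftrightarrow> edual n C \<subseteq> C"

end

theory Submission
  imports Defs "HOL-Number_Theory.Cong"
begin

text \<open>Identify a word of length 2m with a pair (u1, u2) of polynomials of degree < m. The
Euclidean inner product of [a] and [b] is the constant term of a conj(b) in R, a nondegenerate
pairing, so (u1, u2) lies in the dual of D1 iff x^m - 1 divides u1 conj(g1) + u2 conj(v1 g1) and
u2 conj(g2). For a monic divisor g of x^m - 1, the multiples of conj(g) vanishing in R are
exactly the multiples of g^perp, so the dual consists of the pairs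
(g1^perp a - g2^perp b conj(v1), g2^perp b). Dual-containment therefore only has to be checked on
the generators (a, b) = (1, 0) and (0, 1), against the description
D1 = {(u1, u2). g1 | u1, g2 | u2 - v1 u1}. Of the four resulting divisibilities,
g2 | v1 g1^perp follows from g1 | g2^perp conj(v1) by conjugating, because x^m - 1 divides
g1^perp conj(g1).\<close>

section \<open>Arithmetic modulo x^m - 1\<close>

lemma degree_xm1: "m \<ge> 1 \<Longrightarrow> degree (xm1 m :: 'a::field poly) = m"
proof -
  assume "m \<ge> 1"
  then have "degree (monom 1 m + (- 1 :: 'a poly)) = m"
    by (subst degree_add_eq_left) (simp_all add: degree_monom_eq)
  then show ?thesis by (simp add: xm1_def)
qed

lemma xm1_neq_0: "m \<ge> 1 \<Longrightarrow> (xm1 m :: 'a::field poly) \<noteq> 0"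
  using degree_xm1[of m] by (metis degree_0 not_one_le_zero)

lemma degree_mod_xm1_less: "m \<ge> 1 \<Longrightarrow> degree (p mod xm1 m :: 'a::field poly) < m"
  by (metis degree_0 degree_mod_less degree_xm1 not_gr_zero not_one_le_zero xm1_neq_0)

lemma cong_xm1_imp_eq:
  fixes a b :: "'a::field poly"
  assumes "m \<ge> 1" "degree a < m" "degree b < m" "[a = b] (mod xm1 m)"
  shows "a = b"
  using assms by (metis cong_def degree_xm1 mod_poly_less)

lemma cong_monom_power_xm1: "[monom 1 (m * q) = (1::'a::field poly)] (mod xm1 m)"
proof -
  have "[(monom 1 m) ^ q = (1::'a poly) ^ q] (mod xm1 m)"
    by (intro cong_pow) (simp add: cong_iff_dvd_diff xm1_def)
  then show ?thesis by (simp add: monom_power mult.commute)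
qed

lemma cong_monom_xm1:
  assumes "k mod m = k' mod m"
  shows "[monom c k = (monom c k' :: 'a::field poly)] (mod xm1 m)"
proof -
  have "[monom c (k mod m + m * (k div m)) = (monom c (k mod m) :: 'a poly)] (mod xm1 m)"
    using cong_scalar_left[OF cong_monom_power_xm1, of "monom c (k mod m)" m "k div m"]
    by (simp add: mult_monom)
  moreover have "[monom c (k' mod m + m * (k' div m)) = (monom c (k' mod m) :: 'a poly)] (mod xm1 m)"
    using cong_scalar_left[OF cong_monom_power_xm1, of "monom c (k' mod m)" m "k' div m"]
    by (simp add: mult_monom)
  ultimately show ?thesis using assms by (metis cong_sym cong_trans mod_mult_div_eq)
qed

lemma monom_mod_xm1:
  "m \<ge> 1 \<Longrightarrow> monom c k mod xm1 m = (monom c (k mod m) :: 'a::field poly)"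
  using cong_monom_xm1[of k m "k mod m" c]
  by (metis cong_def degree_monom_le degree_xm1 le_less_trans mod_less_divisor mod_mod_trivial
      mod_poly_less not_one_le_zero not_gr_zero)

lemma cong_pcompose:
  "[q = q'] (mod n) \<Longrightarrow> [p \<circ>\<^sub>p q = p \<circ>\<^sub>p q'] (mod n)" for q q' n :: "'a::field poly"
proof (induction p)
  case (pCons a p)
  then have "[[:a:] + q * (p \<circ>\<^sub>p q) = [:a:] + q' * (p \<circ>\<^sub>p q')] (mod n)"
    by (intro cong_add cong_mult) auto
  then show ?case by (simp add: pcompose_pCons)
qed simp

section \<open>Conjugation\<close>

text \<open>Since x^(m-1) is the inverse of x modulo x^m - 1, substituting it is a ring endomorphism
of F[x] that induces the conjugation of R on arbitrary representatives; rconj is its reduced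
form (cong_rconj_pconj).\<close>

definition pconj :: "nat \<Rightarrow> 'a::field poly \<Rightarrow> 'a poly" where
  "pconj m p = p \<circ>\<^sub>p monom 1 (m - 1)"

lemma pconj_0 [simp]: "pconj m 0 = 0"
  and pconj_1 [simp]: "pconj m 1 = 1"
  and pconj_add: "pconj m (p + q) = pconj m p + pconj m q"
  and pconj_diff: "pconj m (p - q) = pconj m p - pconj m q"
  and pconj_mult: "pconj m (p * q) = pconj m p * pconj m q"
  and pconj_smult: "pconj m (smult c p) = smult c (pconj m p)"
  and pconj_sum: "pconj m (sum f A) = (\<Sum>i\<in>A. pconj m (f i))"
  by (simp_all add: pconj_def pcompose_1 pcompose_add pcompose_diff pcompose_mult
      pcompose_smult pcompose_sum)

lemma pconj_monom: "pconj m (monom c n) = monom c (n * (m - 1))"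
proof (induction n)
  case 0
  then show ?case by (simp add: pconj_def monom_0)
next
  case (Suc n)
  have "pconj m (monom c (Suc n)) = monom 1 (m - 1) * pconj m (monom c n)"
    by (simp add: pconj_def monom_Suc pcompose_pCons)
  then show ?case by (simp add: Suc mult_monom)
qed

lemma cong_pconj:
  assumes "[a = b] (mod xm1 m)"
  shows "[pconj m a = pconj m b] (mod xm1 m)"
proof -
  obtain k where k: "b = a + xm1 m * k" using assms cong_iff_lin by blast
  have pconj_xm1: "pconj m (xm1 m) = monom 1 (m * (m - 1)) - 1"
    by (simp add: xm1_def pconj_diff pconj_monom mult.commute)
  have "[pconj m (xm1 m) = 1 - 1] (mod xm1 m)"
    unfolding pconj_xm1 by (intro cong_diff cong_monom_power_xm1 cong_refl)
  then have "[pconj m a + pconj m (xm1 m) * pconj m k = pconj m a + 0 * pconj m k] (mod xm1 m)"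
    by (intro cong_add cong_mult) auto
  then show ?thesis by (simp add: k pconj_add pconj_mult cong_sym)
qed

lemma cong_pconj_pconj:
  assumes "m \<ge> 1"
  shows "[pconj m (pconj m p) = p] (mod xm1 m)"
proof -
  have "(m - 1) * (m - 1) mod m = 1 mod m"
  proof (cases "m = 1")
    case False
    with assms have "(m - 1) * (m - 1) = 1 + (m - 2) * m"
      by (cases m) (auto simp: algebra_simps)
    then show ?thesis by (simp only: mod_mult_self1)
  qed simp
  then have "[monom 1 ((m - 1) * (m - 1)) = (monom 1 1 :: 'a poly)] (mod xm1 m)"
    by (rule cong_monom_xm1)
  then have "[p \<circ>\<^sub>p monom 1 ((m - 1) * (m - 1)) = p \<circ>\<^sub>p monom 1 1] (mod xm1 m)"
    by (rule cong_pcompose)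
  moreover have "pconj m (pconj m p) = p \<circ>\<^sub>p monom 1 ((m - 1) * (m - 1))"
  proof -
    have "monom 1 (m - 1) \<circ>\<^sub>p monom 1 (m - 1) = (monom 1 ((m - 1) * (m - 1)) :: 'a poly)"
      using pconj_monom[of m 1 "m - 1"] unfolding pconj_def .
    then show ?thesis unfolding pconj_def pcompose_assoc[symmetric] by simp
  qed
  moreover have "p \<circ>\<^sub>p monom 1 1 = p"
    unfolding One_nat_def monom_Suc monom_0 pcompose_idR ..
  ultimately show ?thesis by simp
qed

lemma poly_as_sum_of_monoms_less:
  assumes "m \<ge> 1" "degree p < m"
  shows "(\<Sum>n<m. monom (coeff p n) n) = p"
proof -
  have "{..<m} = {..m - 1}" using assms(1) by auto
  then show ?thesis using poly_as_sum_of_monoms'[of p "m - 1"] assms by simp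
qed

lemma rconj_eq_sum_monom:
  assumes "m \<ge> 1"
  shows "rconj m v = (\<Sum>n<m. monom (coeff v n) ((m - n) mod m))"
proof (rule poly_eqI)
  fix i
  have "coeff (\<Sum>n<m. monom (coeff v n) ((m - n) mod m)) i
      = (\<Sum>n<m. if n = (m - i) mod m \<and> i < m then coeff v n else 0)"
    unfolding coeff_sum coeff_monom
    by (rule sum.cong) (use assms in \<open>auto simp: mod_if split: if_splits\<close>)
  also have "\<dots> = (if i < m then coeff v ((m - i) mod m) else 0)"
    using assms by auto
  finally show "coeff (rconj m v) i = coeff (\<Sum>n<m. monom (coeff v n) ((m - n) mod m)) i"
    by (simp add: rconj_def nth_default_def)
qed

lemma mult_pred_mod_eq:
  fixes n m :: nat
  assumes "n < m"
  shows "n * (m - 1) mod m = (m - n) mod m"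
proof (cases n)
  case (Suc k)
  with assms have "n * (m - 1) = (m - n) + k * m"
    by (simp add: algebra_simps diff_mult_distrib2)
  then show ?thesis by simp
qed simp

lemma cong_rconj_pconj:
  assumes "m \<ge> 1" "degree v < m"
  shows "[rconj m v = pconj m v] (mod xm1 m)"
proof -
  have "pconj m v = (\<Sum>n<m. monom (coeff v n) (n * (m - 1)))"
    by (subst poly_as_sum_of_monoms_less[OF assms, symmetric]) (simp add: pconj_sum pconj_monom)
  then show ?thesis
    unfolding rconj_eq_sum_monom[OF assms(1)]
    by (simp only:) (intro cong_sum cong_monom_xm1, metis lessThan_iff mod_mod_trivial mult_pred_mod_eq)
qed

section \<open>The inner product in R\<close>

definition rinner :: "nat \<Rightarrow> 'a::field poly \<Rightarrow> 'a poly \<Rightarrow> 'a" where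
  "rinner m a b = coeff ((a * pconj m b) mod xm1 m) 0"

lemma rinner_cong:
  assumes "[a = a'] (mod xm1 m)" "[b = b'] (mod xm1 m)"
  shows "rinner m a b = rinner m a' b'"
proof -
  have "[a * pconj m b = a' * pconj m b'] (mod xm1 m)"
    using assms by (intro cong_mult cong_pconj)
  then show ?thesis by (simp add: rinner_def cong_def)
qed

lemma poly_mod_sum_left: "sum f A mod (z::'a::field poly) = (\<Sum>i\<in>A. f i mod z)"
  by (induction A rule: infinite_finite_induct) (simp_all add: poly_mod_add_left)

lemma rinner_sum_left: "rinner m (sum f A) b = (\<Sum>i\<in>A. rinner m (f i) b)"
  by (simp add: rinner_def sum_distrib_right poly_mod_sum_left coeff_sum)

lemma rinner_sum_right: "rinner m a (sum f A) = (\<Sum>i\<in>A. rinner m a (f i))"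
  by (simp add: rinner_def pconj_sum sum_distrib_left poly_mod_sum_left coeff_sum)

lemma rinner_add_left: "rinner m (a + a') b = rinner m a b + rinner m a' b"
  by (simp add: rinner_def distrib_right poly_mod_add_left)

lemma rinner_add_right: "rinner m a (b + b') = rinner m a b + rinner m a b'"
  by (simp add: rinner_def pconj_add distrib_left poly_mod_add_left)

lemma rinner_0_right [simp]: "rinner m a 0 = 0"
  by (simp add: rinner_def)

lemma rinner_mult_right: "rinner m a (r * g) = rinner m (a * pconj m g) r"
  by (simp add: rinner_def pconj_mult ac_simps)

lemma rinner_monom:
  assumes "m \<ge> 1" "i < m" "n < m"
  shows "rinner m (monom c i) (monom d n) = (if i = n then c * d else 0)"
proof -
  have "(i + n * (m - 1)) mod m = (i + (m - n)) mod m"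
    using mult_pred_mod_eq[OF assms(3)] by (metis mod_add_right_eq)
  also have "\<dots> = 0 \<longleftrightarrow> i = n"
    using assms by (auto simp: mod_if)
  finally show ?thesis
    by (simp add: rinner_def pconj_monom mult_monom monom_mod_xm1[OF assms(1)] coeff_monom)
qed

lemma einner_cvec: "einner (cvec m a) (cvec m b) = (\<Sum>i<m. coeff a i * coeff b i)"
  unfolding einner_def cvec_def
  by (simp add: zip_map_map zip_same_conv_map interv_sum_list_conv_sum_set_nat
      atLeast0LessThan comp_def)

lemma einner_cvec_eq_rinner:
  assumes "m \<ge> 1" "degree a < m" "degree b < m"
  shows "einner (cvec m a) (cvec m b) = rinner m a b"
proof -
  have "rinner m a b = (\<Sum>n<m. rinner m a (monom (coeff b n) n))"
    using rinner_sum_right[of m a "\<lambda>n. monom (coeff b n) n" "{..<m}"]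
    unfolding poly_as_sum_of_monoms_less[OF assms(1,3)] .
  also have "\<dots> = (\<Sum>n<m. \<Sum>i<m. rinner m (monom (coeff a i) i) (monom (coeff b n) n))"
    using rinner_sum_left[of m "\<lambda>i. monom (coeff a i) i" "{..<m}"]
    unfolding poly_as_sum_of_monoms_less[OF assms(1,2)] by simp
  also have "\<dots> = (\<Sum>n<m. coeff a n * coeff b n)"
    using assms by (simp add: rinner_monom)
  finally show ?thesis by (simp add: einner_cvec)
qed

lemma rinner_monom_1_right:
  assumes "m \<ge> 1" "degree a < m" "j < m"
  shows "rinner m a (monom 1 j) = coeff a j"
proof -
  have "einner (cvec m a) (cvec m (monom 1 j)) = (\<Sum>i<m. if j = i then coeff a i else 0)"
    unfolding einner_cvec by (rule sum.cong) (simp_all add: coeff_monom)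
  then show ?thesis
    using assms einner_cvec_eq_rinner[of m a "monom 1 j"] by (simp add: degree_monom_eq)
qed

lemma xm1_dvd_iff_rinner_eq_0:
  assumes "m \<ge> 1"
  shows "xm1 m dvd w \<longleftrightarrow> (\<forall>r. degree r < m \<longrightarrow> rinner m w r = 0)"
proof
  assume "xm1 m dvd w"
  then have "rinner m w r = rinner m 0 r" for r
    by (intro rinner_cong) (simp_all add: cong_0_iff cong_sym)
  then show "\<forall>r. degree r < m \<longrightarrow> rinner m w r = 0"
    by (simp add: rinner_def)
next
  assume orth: "\<forall>r. degree r < m \<longrightarrow> rinner m w r = 0"
  have "coeff (w mod xm1 m) j = 0" for j
  proof (cases "j < m")
    case True
    have "coeff (w mod xm1 m) j = rinner m (w mod xm1 m) (monom 1 j)"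
      using rinner_monom_1_right[OF assms degree_mod_xm1_less[OF assms, of w] True] by simp
    also have "\<dots> = rinner m w (monom 1 j)"
      by (intro rinner_cong) simp_all
    also have "\<dots> = 0"
      using orth True by (simp add: degree_monom_eq)
    finally show ?thesis .
  next
    case False
    then show ?thesis
      using degree_mod_xm1_less[OF assms, of w] by (simp add: coeff_eq_0)
  qed
  then have "w mod xm1 m = 0"
    by (intro poly_eqI) simp
  then show "xm1 m dvd w"
    by (simp add: mod_eq_0_iff_dvd)
qed

section \<open>Reciprocal polynomials and g^perp\<close>

lemma reflect_poly_as_sum_of_monoms:
  "reflect_poly p = (\<Sum>n\<le>degree p. monom (coeff p n) (degree p - n))"
proof (rule poly_eqI)
  fix k
  have "coeff (\<Sum>n\<le>degree p. monom (coeff p n) (degree p - n)) k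
      = (\<Sum>n\<le>degree p. if n = degree p - k \<and> k \<le> degree p then coeff p n else 0)"
    unfolding coeff_sum coeff_monom by (rule sum.cong) auto
  then show "coeff (reflect_poly p) k = coeff (\<Sum>n\<le>degree p. monom (coeff p n) (degree p - n)) k"
    by (simp add: coeff_reflect_poly)
qed

lemma cong_monom_pconj_reflect_poly:
  assumes "m \<ge> 1"
  shows "[monom 1 (degree p) * pconj m p = reflect_poly p] (mod xm1 m)"
proof -
  let ?d = "degree p"
  have "monom 1 ?d * pconj m p = (\<Sum>n\<le>?d. monom (coeff p n) (?d + n * (m - 1)))"
    by (subst (2) poly_as_sum_of_monoms[symmetric])
      (simp add: pconj_sum pconj_monom sum_distrib_left mult_monom)
  moreover have "(?d + n * (m - 1)) mod m = (?d - n) mod m" if "n \<le> ?d" for n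
  proof -
    from that assms have "?d + n * (m - 1) = (?d - n) + n * m"
      by (simp add: algebra_simps diff_mult_distrib2)
    then show ?thesis by simp
  qed
  ultimately show ?thesis
    unfolding reflect_poly_as_sum_of_monoms by (auto intro!: cong_sum cong_monom_xm1)
qed

lemma xm1_dvd_monom_mult_iff:
  fixes y :: "'a::field poly"
  assumes "m \<ge> 1"
  shows "xm1 m dvd monom 1 d * y \<longleftrightarrow> xm1 m dvd y"
proof
  have "monom 1 (d * (m - 1)) * monom 1 d = (monom 1 (m * d) :: 'a poly)"
    using assms by (simp add: mult_monom algebra_simps diff_mult_distrib2)
  then have "[monom 1 (d * (m - 1)) * (monom 1 d * y) = 1 * y] (mod xm1 m)"
    unfolding mult.assoc[symmetric] by (intro cong_mult) (simp_all add: cong_monom_power_xm1)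
  moreover assume "xm1 m dvd monom 1 d * y"
  then have "[monom 1 (d * (m - 1)) * (monom 1 d * y) = 0] (mod xm1 m)"
    by (simp add: cong_0_iff)
  ultimately have "[y = 0] (mod xm1 m)"
    by (metis cong_sym cong_trans mult_1)
  then show "xm1 m dvd y"
    by (simp add: cong_0_iff)
qed simp

lemma reflect_poly_xm1:
  assumes "m \<ge> 1"
  shows "reflect_poly (xm1 m) = - (xm1 m :: 'a::field poly)"
proof (rule poly_eqI)
  fix n
  show "coeff (reflect_poly (xm1 m)) n = coeff (- (xm1 m :: 'a poly)) n"
    using assms unfolding coeff_reflect_poly degree_xm1[OF assms]
    by (auto simp: xm1_def coeff_monom coeff_1)
qed

lemma coeff_0_xm1_div_neq_0:
  fixes g :: "'a::field poly"
  assumes "m \<ge> 1" "g dvd xm1 m"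
  shows "coeff (xm1 m div g) 0 \<noteq> 0"
proof -
  have "poly g 0 * poly (xm1 m div g) 0 = poly (xm1 m) 0"
    using assms(2) by (metis dvd_mult_div_cancel poly_mult)
  also have "\<dots> = -1"
    using assms(1) by (simp add: xm1_def poly_monom)
  finally show ?thesis by (auto simp: poly_0_coeff_0)
qed

lemma reflect_poly_mult_reflect_poly_xm1_div:
  fixes g :: "'a::field poly"
  assumes "m \<ge> 1" "g dvd xm1 m"
  shows "reflect_poly g * reflect_poly (xm1 m div g) = - xm1 m"
  using assms by (metis dvd_mult_div_cancel reflect_poly_mult reflect_poly_xm1)

lemma rperp_eq:
  fixes g :: "'a::field_gcd poly"
  assumes "lead_coeff g = 1" "g dvd xm1 m"
  shows "rperp m g
    = smult (inverse (coeff (xm1 m div g) 0)) (reflect_poly (xm1 m div g)) mod xm1 m"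
proof -
  have "normalize g = g"
    using assms(1) by (simp add: normalize_poly_def pCons_one)
  then have "gcd g (xm1 m) = g"
    using assms(2) by (simp add: gcd_proj1_if_dvd)
  then show ?thesis by (simp add: rperp_def Let_def poly_0_coeff_0)
qed

lemma degree_rperp_less: "m \<ge> 1 \<Longrightarrow> degree (rperp m g) < m"
  unfolding rperp_def Let_def by (rule degree_mod_xm1_less)

lemma xm1_dvd_mult_pconj_iff_reflect_poly_dvd:
  fixes g u :: "'a::field poly"
  assumes "m \<ge> 1" "g dvd xm1 m"
  shows "xm1 m dvd u * pconj m g \<longleftrightarrow> reflect_poly (xm1 m div g) dvd u"
proof -
  have "g \<noteq> 0"
    using assms(2) xm1_neq_0[OF assms(1)] by auto
  txt \<open>x^(deg g) is a unit of R and turns conj(g) into the reciprocal of g.\<close>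
  have "xm1 m dvd u * pconj m g \<longleftrightarrow> xm1 m dvd monom 1 (degree g) * (u * pconj m g)"
    by (rule xm1_dvd_monom_mult_iff[OF assms(1), symmetric])
  also have "\<dots> \<longleftrightarrow> xm1 m dvd reflect_poly g * u"
  proof (rule cong_dvd_iff)
    show "[monom 1 (degree g) * (u * pconj m g) = reflect_poly g * u] (mod xm1 m)"
      using cong_scalar_right[OF cong_monom_pconj_reflect_poly[OF assms(1), of g], of u]
      by (metis mult.assoc mult.commute)
  qed
  also have "\<dots> \<longleftrightarrow> reflect_poly g * reflect_poly (xm1 m div g) dvd reflect_poly g * u"
    using reflect_poly_mult_reflect_poly_xm1_div[OF assms] by simp
  also have "\<dots> \<longleftrightarrow> reflect_poly (xm1 m div g) dvd u"
    using \<open>g \<noteq> 0\<close> by simp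
  finally show ?thesis .
qed

lemma rperp_dvd_iff:
  fixes g u :: "'a::field_gcd poly"
  assumes m: "m \<ge> 1" and g: "lead_coeff g = 1" "g dvd xm1 m" and u: "degree u < m"
  shows "rperp m g dvd u \<longleftrightarrow> reflect_poly (xm1 m div g) dvd u"
proof -
  define h where "h = xm1 m div g"
  define c where "c = inverse (coeff h 0)"
  have "c \<noteq> 0" "coeff h 0 \<noteq> 0"
    using coeff_0_xm1_div_neq_0[OF m g(2)] by (simp_all add: c_def h_def)
  have perp: "rperp m g = smult c (reflect_poly h) mod xm1 m"
    using rperp_eq[OF g] by (simp add: c_def h_def)
  show ?thesis
  proof (cases "degree h < m")
    case True
    then have "rperp m g = smult c (reflect_poly h)"
      unfolding perp using \<open>coeff h 0 \<noteq> 0\<close> by (simp add: degree_xm1[OF m] mod_poly_less)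
    then show ?thesis
      using \<open>c \<noteq> 0\<close> by (simp add: smult_dvd_iff h_def)
  next
    case False
    txt \<open>The degenerate case g = 1, where g^perp vanishes in R.\<close>
    have "g * h = xm1 m" "xm1 m \<noteq> 0"
      using g(2) xm1_neq_0[OF m] by (simp_all add: h_def)
    then have "degree g + degree h = m"
      using degree_xm1[OF m] by (metis degree_mult_eq mult_eq_0_iff)
    moreover have "degree h \<le> m"
      using dvd_imp_degree_le[of h "xm1 m"] \<open>g * h = xm1 m\<close> \<open>xm1 m \<noteq> 0\<close> degree_xm1[OF m]
      by (metis dvd_triv_right)
    ultimately have "degree g = 0"
      using False by linarith
    then have "g = 1"
      using g(1) degree_0_id[of g] by (simp add: one_pCons)
    then have "h = xm1 m"
      by (simp add: h_def)
    then have "rperp m g = 0"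
      using perp reflect_poly_xm1[OF m, where 'a = 'a] by (simp add: mod_eq_0_iff_dvd dvd_smult)
    moreover have "xm1 m dvd u \<longleftrightarrow> u = 0"
      using u dvd_imp_degree_le[of "xm1 m" u] degree_xm1[OF m, where 'a = 'a] by auto
    ultimately show ?thesis
      using reflect_poly_xm1[OF m, where 'a = 'a] \<open>g = 1\<close> by simp
  qed
qed

lemma xm1_dvd_mult_pconj_iff:
  fixes g w :: "'a::field_gcd poly"
  assumes m: "m \<ge> 1" and g: "lead_coeff g = 1" "g dvd xm1 m"
  shows "xm1 m dvd w * pconj m g \<longleftrightarrow> (\<exists>k. [w = rperp m g * k] (mod xm1 m))"
proof
  assume "xm1 m dvd w * pconj m g"
  moreover have "[w mod xm1 m * pconj m g = w * pconj m g] (mod xm1 m)"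
    by (intro cong_scalar_right) simp
  ultimately have "xm1 m dvd w mod xm1 m * pconj m g"
    using cong_dvd_iff by blast
  then have "rperp m g dvd w mod xm1 m"
    using rperp_dvd_iff[OF m g degree_mod_xm1_less[OF m]]
      xm1_dvd_mult_pconj_iff_reflect_poly_dvd[OF m g(2)] by blast
  then obtain k where "w mod xm1 m = rperp m g * k" ..
  then have "[w = rperp m g * k] (mod xm1 m)"
    by (metis cong_mod_left cong_refl)
  then show "\<exists>k. [w = rperp m g * k] (mod xm1 m)" ..
next
  assume "\<exists>k. [w = rperp m g * k] (mod xm1 m)"
  then obtain k where "[w = rperp m g * k] (mod xm1 m)" ..
  then have "[w * pconj m g = rperp m g * pconj m g * k] (mod xm1 m)"
    by (metis cong_scalar_right mult.assoc mult.commute)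
  moreover have "xm1 m dvd rperp m g * pconj m g"
    using rperp_dvd_iff[OF m g degree_rperp_less[OF m, of g]]
      xm1_dvd_mult_pconj_iff_reflect_poly_dvd[OF m g(2)] by simp
  ultimately show "xm1 m dvd w * pconj m g"
    using cong_dvd_iff by (metis dvd_mult2)
qed

lemma dvd_if_xm1_dvd_pconj_rperp_mult:
  fixes g w :: "'a::field_gcd poly"
  assumes m: "m \<ge> 1" and g: "lead_coeff g = 1" "g dvd xm1 m"
    and dvd: "xm1 m dvd pconj m (rperp m g) * w"
  shows "g dvd w"
proof -
  define h where "h = xm1 m div g"
  define c where "c = inverse (coeff h 0)"
  have "c \<noteq> 0" "coeff h 0 \<noteq> 0"
    using coeff_0_xm1_div_neq_0[OF m g(2)] by (simp_all add: c_def h_def)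
  let ?r = "reflect_poly h"
  let ?d = "degree ?r"
  txt \<open>Modulo x^m - 1, conj(g^perp) is c x^(-deg h) h with h = (x^m - 1)/g.\<close>
  have "[rperp m g = smult c ?r] (mod xm1 m)"
    using rperp_eq[OF g] by (simp add: c_def h_def)
  then have "[monom 1 ?d * (pconj m (rperp m g) * w) = monom 1 ?d * (smult c (pconj m ?r) * w)]
      (mod xm1 m)"
    by (intro cong_scalar_left cong_scalar_right) (metis cong_pconj pconj_smult)
  also have "monom 1 ?d * (smult c (pconj m ?r) * w) = [:c:] * (monom 1 ?d * pconj m ?r * w)"
    by (simp add: ac_simps)
  also have "[[:c:] * (monom 1 ?d * pconj m ?r * w) = [:c:] * (h * w)] (mod xm1 m)"
    using cong_monom_pconj_reflect_poly[OF m, of ?r] \<open>coeff h 0 \<noteq> 0\<close>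
    by (intro cong_scalar_left cong_scalar_right) simp
  finally have "[monom 1 ?d * (pconj m (rperp m g) * w) = [:c:] * (h * w)] (mod xm1 m)" .
  moreover have "xm1 m dvd monom 1 ?d * (pconj m (rperp m g) * w)"
    using dvd by (rule dvd_mult)
  ultimately have "xm1 m dvd smult c (h * w)"
    using cong_dvd_iff by fastforce
  then have "g * h dvd w * h"
    using \<open>c \<noteq> 0\<close> g(2) by (simp add: dvd_smult_iff h_def ac_simps)
  moreover have "h \<noteq> 0"
    using \<open>coeff h 0 \<noteq> 0\<close> by auto
  ultimately show ?thesis
    by simp
qed

section \<open>Quasi-cyclic codes of index 2\<close>

lemma length_cvec [simp]: "length (cvec m a) = m"
  by (simp add: cvec_def)

lemma cvec_eq_iff:
  assumes "degree a < m" "degree b < m"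
  shows "cvec m a = cvec m b \<longleftrightarrow> a = b"
proof
  assume eq: "cvec m a = cvec m b"
  show "a = b"
  proof (rule poly_eqI)
    fix i
    show "coeff a i = coeff b i"
      using eq assms by (cases "i < m") (auto simp: cvec_def coeff_eq_0 dest: map_eq_conv[THEN iffD1])
  qed
qed simp

lemma cvec_Poly:
  assumes "length l = m"
  shows "cvec m (Poly l) = l"
  using assms by (intro nth_equalityI) (auto simp: cvec_def nth_default_def)

lemma degree_Poly_less:
  assumes "length l = m" "m \<ge> 1"
  shows "degree (Poly l) < m"
proof -
  have "degree (Poly l) \<le> m - 1"
    by (rule degree_le) (use assms in \<open>auto simp: nth_default_def\<close>)
  then show ?thesis
    using assms(2) by simp
qed

lemma list_eq_cvec_append:
  assumes "length u = 2 * m" "m \<ge> 1"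
  obtains u1 u2 where "degree u1 < m" "degree u2 < m" "u = cvec m u1 @ cvec m u2"
proof
  show "degree (Poly (take m u)) < m" "degree (Poly (drop m u)) < m"
    using assms by (simp_all add: degree_Poly_less)
  show "u = cvec m (Poly (take m u)) @ cvec m (Poly (drop m u))"
    using assms by (simp add: cvec_Poly)
qed

lemma einner_append:
  "length a = length c \<Longrightarrow> einner (a @ b) (c @ d) = einner a c + einner b d"
  by (simp add: einner_def)

lemma cong_rmult: "[rmult m a b = a * b] (mod xm1 m)"
  by (simp add: rmult_def)

lemma degree_rmult_less: "m \<ge> 1 \<Longrightarrow> degree (rmult m a b) < m"
  by (simp add: rmult_def degree_mod_xm1_less)

lemma cvec_append_mem_qc_code_iff:
  fixes u11 u12 u21 u22 x y :: "'a::field poly"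
  assumes m: "m \<ge> 1" and x: "degree x < m" and y: "degree y < m"
  shows "cvec m x @ cvec m y \<in> qc_code m u11 u12 u21 u22 \<longleftrightarrow>
    (\<exists>r1 r2. [x = r1 * u11 + r2 * u21] (mod xm1 m) \<and> [y = r1 * u12 + r2 * u22] (mod xm1 m))"
proof
  assume "cvec m x @ cvec m y \<in> qc_code m u11 u12 u21 u22"
  then obtain r1 r2 where
    "cvec m x = cvec m (rmult m r1 u11 + rmult m r2 u21)"
    "cvec m y = cvec m (rmult m r1 u12 + rmult m r2 u22)"
    by (auto simp: qc_code_def)
  then have "x = rmult m r1 u11 + rmult m r2 u21" "y = rmult m r1 u12 + rmult m r2 u22"
    using x y by (simp_all add: cvec_eq_iff degree_add_less degree_rmult_less[OF m])
  then show "\<exists>r1 r2. [x = r1 * u11 + r2 * u21] (mod xm1 m) \<and> [y = r1 * u12 + r2 * u22] (mod xm1 m)"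
    by (auto intro: cong_add cong_rmult)
next
  assume "\<exists>r1 r2. [x = r1 * u11 + r2 * u21] (mod xm1 m) \<and> [y = r1 * u12 + r2 * u22] (mod xm1 m)"
  then obtain r1 r2 where cx: "[x = r1 * u11 + r2 * u21] (mod xm1 m)"
    and cy: "[y = r1 * u12 + r2 * u22] (mod xm1 m)" by blast
  define s1 s2 where "s1 = r1 mod xm1 m" and "s2 = r2 mod xm1 m"
  have s: "[r1 * u + r2 * u' = rmult m s1 u + rmult m s2 u'] (mod xm1 m)" for u u'
    unfolding s1_def s2_def rmult_def by (intro cong_add) (simp_all add: cong_scalar_right cong_sym)
  have "x = rmult m s1 u11 + rmult m s2 u21"
    using cong_trans[OF cx s] x
    by (simp add: cong_xm1_imp_eq[OF m] degree_add_less degree_rmult_less[OF m])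
  moreover have "y = rmult m s1 u12 + rmult m s2 u22"
    using cong_trans[OF cy s] y
    by (simp add: cong_xm1_imp_eq[OF m] degree_add_less degree_rmult_less[OF m])
  moreover have "s1 \<in> Rset m" "s2 \<in> Rset m"
    by (simp_all add: s1_def s2_def Rset_def degree_mod_xm1_less[OF m])
  ultimately show "cvec m x @ cvec m y \<in> qc_code m u11 u12 u21 u22"
    unfolding qc_code_def by blast
qed

lemma cvec_append_mem_edual_qc_code_iff:
  fixes u11 u12 u21 u22 u1 u2 :: "'a::field poly"
  assumes m: "m \<ge> 1" and u1: "degree u1 < m" and u2: "degree u2 < m"
  shows "cvec m u1 @ cvec m u2 \<in> edual (2 * m) (qc_code m u11 u12 u21 u22) \<longleftrightarrow>
    xm1 m dvd u1 * pconj m u11 + u2 * pconj m u12 \<and> xm1 m dvd u1 * pconj m u21 + u2 * pconj m u22"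
    (is "_ \<longleftrightarrow> xm1 m dvd ?w1 \<and> xm1 m dvd ?w2")
proof -
  have inner: "einner (cvec m u1 @ cvec m u2)
      (cvec m (rmult m r1 u11 + rmult m r2 u21) @ cvec m (rmult m r1 u12 + rmult m r2 u22))
    = rinner m ?w1 r1 + rinner m ?w2 r2" for r1 r2
  proof -
    have "einner (cvec m u1 @ cvec m u2)
        (cvec m (rmult m r1 u11 + rmult m r2 u21) @ cvec m (rmult m r1 u12 + rmult m r2 u22))
      = rinner m u1 (rmult m r1 u11 + rmult m r2 u21) + rinner m u2 (rmult m r1 u12 + rmult m r2 u22)"
      using u1 u2
      by (simp add: einner_append einner_cvec_eq_rinner[OF m] degree_add_less degree_rmult_less[OF m])
    also have "\<dots> = rinner m u1 (r1 * u11 + r2 * u21) + rinner m u2 (r1 * u12 + r2 * u22)"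
      by (intro arg_cong2[where f = "(+)"] rinner_cong cong_refl cong_add cong_rmult)
    also have "\<dots> = rinner m ?w1 r1 + rinner m ?w2 r2"
      by (simp add: rinner_add_left rinner_add_right rinner_mult_right)
    finally show ?thesis .
  qed
  have "cvec m u1 @ cvec m u2 \<in> edual (2 * m) (qc_code m u11 u12 u21 u22) \<longleftrightarrow>
      (\<forall>r1 r2. degree r1 < m \<longrightarrow> degree r2 < m \<longrightarrow> rinner m ?w1 r1 + rinner m ?w2 r2 = 0)"
    unfolding edual_def qc_code_def Rset_def inner[symmetric] by auto
  also have "\<dots> \<longleftrightarrow>
      (\<forall>r. degree r < m \<longrightarrow> rinner m ?w1 r = 0) \<and> (\<forall>r. degree r < m \<longrightarrow> rinner m ?w2 r = 0)"
  proof safe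
    fix r :: "'a poly"
    assume orth:
      "\<forall>r1 r2. degree r1 < m \<longrightarrow> degree r2 < m \<longrightarrow> rinner m ?w1 r1 + rinner m ?w2 r2 = 0"
      and "degree r < m"
    then show "rinner m ?w1 r = 0" "rinner m ?w2 r = 0"
      using orth[rule_format, of r 0] orth[rule_format, of 0 r] m by simp_all
  qed auto
  also have "\<dots> \<longleftrightarrow> xm1 m dvd ?w1 \<and> xm1 m dvd ?w2"
    by (simp add: xm1_dvd_iff_rinner_eq_0[OF m])
  finally show ?thesis .
qed

lemma dual_containing_qc_code_iff:
  fixes u11 u12 u21 u22 :: "'a::field poly"
  assumes m: "m \<ge> 1"
  shows "dual_containing (2 * m) (qc_code m u11 u12 u21 u22) \<longleftrightarrow>
    (\<forall>u1 u2. xm1 m dvd u1 * pconj m u11 + u2 * pconj m u12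
           \<and> xm1 m dvd u1 * pconj m u21 + u2 * pconj m u22
      \<longrightarrow> (\<exists>r1 r2. [u1 = r1 * u11 + r2 * u21] (mod xm1 m) \<and> [u2 = r1 * u12 + r2 * u22] (mod xm1 m)))"
    (is "_ \<longleftrightarrow> (\<forall>u1 u2. ?orth u1 u2 \<longrightarrow> ?mem u1 u2)")
proof -
  let ?D = "qc_code m u11 u12 u21 u22"
  have orth_mod: "?orth (u1 mod xm1 m) (u2 mod xm1 m) \<longleftrightarrow> ?orth u1 u2" for u1 u2
  proof -
    have "[u1 mod xm1 m * pconj m u + u2 mod xm1 m * pconj m u' = u1 * pconj m u + u2 * pconj m u']
        (mod xm1 m)" for u u'
      by (intro cong_add cong_scalar_right) simp_all
    from cong_dvd_iff[OF this[of u11 u12]] cong_dvd_iff[OF this[of u21 u22]] show ?thesis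
      by simp
  qed
  have "dual_containing (2 * m) ?D \<longleftrightarrow>
      (\<forall>u1 u2. degree u1 < m \<longrightarrow> degree u2 < m \<longrightarrow> ?orth u1 u2 \<longrightarrow> ?mem u1 u2)"
  proof
    assume sub: "dual_containing (2 * m) ?D"
    show "\<forall>u1 u2. degree u1 < m \<longrightarrow> degree u2 < m \<longrightarrow> ?orth u1 u2 \<longrightarrow> ?mem u1 u2"
    proof (intro allI impI)
      fix u1 u2 :: "'a poly"
      assume deg: "degree u1 < m" "degree u2 < m" and "?orth u1 u2"
      then have "cvec m u1 @ cvec m u2 \<in> edual (2 * m) ?D"
        by (simp add: cvec_append_mem_edual_qc_code_iff[OF m])
      with sub have "cvec m u1 @ cvec m u2 \<in> ?D"
        by (auto simp: dual_containing_def)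
      with deg show "?mem u1 u2"
        by (simp add: cvec_append_mem_qc_code_iff[OF m])
    qed
  next
    assume reduced: "\<forall>u1 u2. degree u1 < m \<longrightarrow> degree u2 < m \<longrightarrow> ?orth u1 u2 \<longrightarrow> ?mem u1 u2"
    show "dual_containing (2 * m) ?D"
      unfolding dual_containing_def
    proof
      fix u
      assume u: "u \<in> edual (2 * m) ?D"
      then have "length u = 2 * m"
        by (simp add: edual_def)
      then obtain u1 u2 where deg: "degree u1 < m" "degree u2 < m"
        and u_eq: "u = cvec m u1 @ cvec m u2"
        using list_eq_cvec_append[OF _ m] by blast
      have "?orth u1 u2"
        using u unfolding u_eq cvec_append_mem_edual_qc_code_iff[OF m deg] .
      with reduced deg have "?mem u1 u2"
        by blast
      then show "u \<in> ?D"
        unfolding u_eq cvec_append_mem_qc_code_iff[OF m deg] .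
    qed
  qed
  also have "\<dots> \<longleftrightarrow> (\<forall>u1 u2. ?orth u1 u2 \<longrightarrow> ?mem u1 u2)"
  proof (intro iffI allI impI)
    fix u1 u2
    assume reduced: "\<forall>u1 u2. degree u1 < m \<longrightarrow> degree u2 < m \<longrightarrow> ?orth u1 u2 \<longrightarrow> ?mem u1 u2"
      and "?orth u1 u2"
    have "?mem (u1 mod xm1 m) (u2 mod xm1 m)"
      using reduced degree_mod_xm1_less[OF m] orth_mod[THEN iffD2, OF \<open>?orth u1 u2\<close>] by blast
    then show "?mem u1 u2"
      by simp
  qed blast
  finally show ?thesis .
qed

section \<open>The code D1\<close>

lemma span_D1_generators_cong_iff:
  fixes g1 g2 v1 u1 u2 :: "'a::field poly"
  assumes "g1 dvd xm1 m" "g2 dvd xm1 m"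
  shows "(\<exists>r1 r2. [u1 = r1 * g1 + r2 * 0] (mod xm1 m)
            \<and> [u2 = r1 * rmult m v1 g1 + r2 * g2] (mod xm1 m))
    \<longleftrightarrow> g1 dvd u1 \<and> g2 dvd u2 - v1 * u1"
proof
  assume "\<exists>r1 r2. [u1 = r1 * g1 + r2 * 0] (mod xm1 m)
            \<and> [u2 = r1 * rmult m v1 g1 + r2 * g2] (mod xm1 m)"
  then obtain r1 r2 where c1: "[u1 = r1 * g1] (mod xm1 m)"
    and c2: "[u2 = r1 * rmult m v1 g1 + r2 * g2] (mod xm1 m)" by auto
  have "[u2 = r1 * (v1 * g1) + r2 * g2] (mod xm1 m)"
    using c2 by (rule cong_trans) (intro cong_add cong_scalar_left cong_rmult cong_refl)
  then have "[u2 - v1 * u1 = (r1 * (v1 * g1) + r2 * g2) - v1 * (r1 * g1)] (mod xm1 m)"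
    using c1 by (intro cong_diff cong_scalar_left)
  then have "[u2 - v1 * u1 = r2 * g2] (mod xm1 m)"
    by (simp add: algebra_simps)
  then have "g2 dvd u2 - v1 * u1"
    using cong_dvd_iff[OF cong_dvd_modulus[OF _ assms(2)]] by simp
  moreover have "g1 dvd u1"
    using cong_dvd_iff[OF cong_dvd_modulus[OF c1 assms(1)]] by simp
  ultimately show "g1 dvd u1 \<and> g2 dvd u2 - v1 * u1" by blast
next
  assume "g1 dvd u1 \<and> g2 dvd u2 - v1 * u1"
  then obtain q p where q: "u1 = g1 * q" and p: "u2 - v1 * u1 = g2 * p"
    by (auto elim!: dvdE)
  have "[u2 = q * (v1 * g1) + p * g2] (mod xm1 m)"
    using p q by (simp add: algebra_simps)
  also have "[q * (v1 * g1) + p * g2 = q * rmult m v1 g1 + p * g2] (mod xm1 m)"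
    by (intro cong_add cong_scalar_left cong_refl cong_sym[OF cong_rmult])
  finally have "[u2 = q * rmult m v1 g1 + p * g2] (mod xm1 m)" .
  with q show "\<exists>r1 r2. [u1 = r1 * g1 + r2 * 0] (mod xm1 m)
            \<and> [u2 = r1 * rmult m v1 g1 + r2 * g2] (mod xm1 m)"
    by (intro exI[of _ q] exI[of _ p]) (simp add: mult.commute)
qed

lemma orthogonal_D1_iff_cong_rperp:
  fixes g1 g2 v1 u1 u2 :: "'a::field_gcd poly"
  assumes m: "m \<ge> 1" and g1: "lead_coeff g1 = 1" "g1 dvd xm1 m"
    and g2: "lead_coeff g2 = 1" "g2 dvd xm1 m" and v1: "degree v1 < m"
  shows "xm1 m dvd u1 * pconj m g1 + u2 * pconj m (rmult m v1 g1)
           \<and> xm1 m dvd u1 * pconj m 0 + u2 * pconj m g2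
    \<longleftrightarrow> (\<exists>a b. [u1 + u2 * rconj m v1 = rperp m g1 * a] (mod xm1 m)
             \<and> [u2 = rperp m g2 * b] (mod xm1 m))"
proof -
  have "[pconj m (rmult m v1 g1) = pconj m v1 * pconj m g1] (mod xm1 m)"
    using cong_pconj[OF cong_rmult] by (simp add: pconj_mult)
  also have "[pconj m v1 * pconj m g1 = rconj m v1 * pconj m g1] (mod xm1 m)"
    using cong_sym[OF cong_rconj_pconj[OF m v1]] by (rule cong_scalar_right)
  finally have "[u1 * pconj m g1 + u2 * pconj m (rmult m v1 g1)
      = u1 * pconj m g1 + u2 * (rconj m v1 * pconj m g1)] (mod xm1 m)"
    by (intro cong_add cong_scalar_left cong_refl)
  then have "[u1 * pconj m g1 + u2 * pconj m (rmult m v1 g1) = (u1 + u2 * rconj m v1) * pconj m g1]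
      (mod xm1 m)"
    by (simp add: algebra_simps)
  then show ?thesis
    using xm1_dvd_mult_pconj_iff[OF m g1] xm1_dvd_mult_pconj_iff[OF m g2]
    by (simp add: cong_dvd_iff)
qed

lemma dvd_all_orthogonal_pairs_iff:
  fixes n g1 g2 p1 p2 w v :: "'a::unique_euclidean_ring"
  assumes "g1 dvd n" "g2 dvd n"
  shows "(\<forall>u1 u2. (\<exists>a b. [u1 + u2 * w = p1 * a] (mod n) \<and> [u2 = p2 * b] (mod n))
            \<longrightarrow> g1 dvd u1 \<and> g2 dvd u2 - v * u1)
    \<longleftrightarrow> g1 dvd p1 \<and> g1 dvd p2 * w \<and> g2 dvd v * p1 \<and> g2 dvd p2 * (1 + w * v)"
    (is "(\<forall>u1 u2. ?orth u1 u2 \<longrightarrow> ?mem u1 u2) \<longleftrightarrow> _")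
proof
  assume all: "\<forall>u1 u2. ?orth u1 u2 \<longrightarrow> ?mem u1 u2"
  have "?orth p1 0"
    by (rule exI[of _ 1], rule exI[of _ 0]) simp
  moreover have "?orth (- (p2 * w)) p2"
    by (rule exI[of _ 0], rule exI[of _ 1]) simp
  ultimately have "?mem p1 0" "?mem (- (p2 * w)) p2"
    using all by blast+
  then show "g1 dvd p1 \<and> g1 dvd p2 * w \<and> g2 dvd v * p1 \<and> g2 dvd p2 * (1 + w * v)"
    by (simp add: algebra_simps)
next
  assume gens: "g1 dvd p1 \<and> g1 dvd p2 * w \<and> g2 dvd v * p1 \<and> g2 dvd p2 * (1 + w * v)"
  show "\<forall>u1 u2. ?orth u1 u2 \<longrightarrow> ?mem u1 u2"
  proof (intro allI impI)
    fix u1 u2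
    assume "?orth u1 u2"
    then obtain a b where ca: "[u1 + u2 * w = p1 * a] (mod n)" and cb: "[u2 = p2 * b] (mod n)"
      by blast
    have c1: "[u1 = p1 * a - b * (p2 * w)] (mod n)"
      using cong_diff[OF ca cong_scalar_right[OF cb, of w]] by (simp add: ac_simps)
    have c2: "[u2 - v * u1 = b * (p2 * (1 + w * v)) - a * (v * p1)] (mod n)"
      using cong_diff[OF cb cong_scalar_left[OF c1, of v]] by (simp add: algebra_simps)
    have "g1 dvd p1 * a - b * (p2 * w)" "g2 dvd b * (p2 * (1 + w * v)) - a * (v * p1)"
      using gens by (simp_all add: dvd_diff dvd_mult dvd_mult2)
    then show "?mem u1 u2"
      using cong_dvd_iff[OF cong_dvd_modulus[OF c1 assms(1)]]
        cong_dvd_iff[OF cong_dvd_modulus[OF c2 assms(2)]] by simp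
  qed
qed

lemma dvd_mult_rperp_if_dvd_rperp_mult_rconj:
  fixes g1 g2 v1 :: "'a::field_gcd poly"
  assumes m: "m \<ge> 1" and g1: "lead_coeff g1 = 1" "g1 dvd xm1 m"
    and g2: "lead_coeff g2 = 1" "g2 dvd xm1 m" and v1: "degree v1 < m"
    and dvd: "g1 dvd rperp m g2 * rconj m v1"
  shows "g2 dvd v1 * rperp m g1"
proof -
  obtain k where k: "rperp m g2 * rconj m v1 = g1 * k"
    using dvd ..
  have "[pconj m (rconj m v1) = v1] (mod xm1 m)"
    using cong_pconj[OF cong_rconj_pconj[OF m v1]] cong_pconj_pconj[OF m] by (rule cong_trans)
  then have "[pconj m (rperp m g2) * (v1 * rperp m g1)
      = pconj m (rperp m g2) * (pconj m (rconj m v1) * rperp m g1)] (mod xm1 m)"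
    by (intro cong_scalar_left cong_scalar_right) (rule cong_sym)
  also have "pconj m (rperp m g2) * (pconj m (rconj m v1) * rperp m g1)
      = pconj m k * (rperp m g1 * pconj m g1)"
    by (simp only: mult.assoc[symmetric] pconj_mult[symmetric] k) (simp add: pconj_mult ac_simps)
  also have "[pconj m k * (rperp m g1 * pconj m g1) = 0] (mod xm1 m)"
  proof -
    have "xm1 m dvd rperp m g1 * pconj m g1"
      unfolding xm1_dvd_mult_pconj_iff[OF m g1] by (rule exI[of _ 1]) simp
    then show ?thesis
      unfolding cong_0_iff by (rule dvd_mult)
  qed
  finally show ?thesis
    using dvd_if_xm1_dvd_pconj_rperp_mult[OF m g2] by (simp add: cong_0_iff)
qed

theorem mainTheorem7:
  fixes g1 g2 v1 :: "'a::{field_gcd, finite} poly" and m :: nat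
  assumes "m \<ge> 1"
    and "lead_coeff g1 = 1" and "g1 dvd xm1 m"
    and "lead_coeff g2 = 1" and "g2 dvd xm1 m"
    and "v1 \<in> Rset m"
  shows "dual_containing (2 * m) (qc_code m g1 (rmult m v1 g1) 0 g2) \<longleftrightarrow>
           (g1 dvd rperp m g1
            \<and> g1 dvd rmult m (rperp m g2) (rconj m v1)
            \<and> g2 dvd rmult m (rperp m g2) (1 + rmult m (rconj m v1) v1))"
proof -
  note m = assms(1) and g1 = assms(2,3) and g2 = assms(4,5)
  have v1: "degree v1 < m"
    using assms(6) by (simp add: Rset_def)
  let ?P1 = "rperp m g1" and ?P2 = "rperp m g2" and ?V = "rconj m v1"
  have "dual_containing (2 * m) (qc_code m g1 (rmult m v1 g1) 0 g2) \<longleftrightarrow>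
      (\<forall>u1 u2. (\<exists>a b. [u1 + u2 * ?V = ?P1 * a] (mod xm1 m) \<and> [u2 = ?P2 * b] (mod xm1 m))
        \<longrightarrow> g1 dvd u1 \<and> g2 dvd u2 - v1 * u1)"
    by (simp only: dual_containing_qc_code_iff[OF m] orthogonal_D1_iff_cong_rperp[OF m g1 g2 v1]
        span_D1_generators_cong_iff[OF g1(2) g2(2)])
  also have "\<dots> \<longleftrightarrow> g1 dvd ?P1 \<and> g1 dvd ?P2 * ?V \<and> g2 dvd v1 * ?P1 \<and> g2 dvd ?P2 * (1 + ?V * v1)"
    by (rule dvd_all_orthogonal_pairs_iff[OF g1(2) g2(2)])
  also have "\<dots> \<longleftrightarrow> g1 dvd ?P1 \<and> g1 dvd ?P2 * ?V \<and> g2 dvd ?P2 * (1 + ?V * v1)"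
    using dvd_mult_rperp_if_dvd_rperp_mult_rconj[OF m g1 g2 v1] by blast
  also have "\<dots> \<longleftrightarrow> g1 dvd ?P1 \<and> g1 dvd rmult m ?P2 ?V \<and> g2 dvd rmult m ?P2 (1 + rmult m ?V v1)"
  proof -
    have "[rmult m ?P2 (1 + rmult m ?V v1) = ?P2 * (1 + ?V * v1)] (mod xm1 m)"
      by (rule cong_trans[OF cong_rmult]) (intro cong_scalar_left cong_add cong_refl cong_rmult)
    from cong_dvd_iff[OF cong_dvd_modulus[OF this g2(2)]]
    have "g2 dvd rmult m ?P2 (1 + rmult m ?V v1) \<longleftrightarrow> g2 dvd ?P2 * (1 + ?V * v1)" .
    moreover have "g1 dvd rmult m ?P2 ?V \<longleftrightarrow> g1 dvd ?P2 * ?V"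
      using cong_dvd_iff[OF cong_dvd_modulus[OF cong_rmult g1(2)]] .
    ultimately show ?thesis
      by simp
  qed
  finally show ?thesis .
qed

end
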